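(* Let $X$ be a Banach space supporting a hereditarily frequently hypercyclic operator. Let $T_1,\dots,T_N\in\mathfrak L(X)$ be such that $(T_1,\dots,T_N)$ is $d$-frequently hypercyclic. Then there exists $T_{N+1}\in\mathfrak L(X)$ such that $(T_1,\dots,T_{N+1})$ is $d$-frequently hypercyclic.
   Context: $\mathcal N_T(x,V):=\{n\in\mathbb N:T^nx\in V\}$. Hereditarily frequently hypercyclic: for every countable family $(V_i)$ of non-empty open sets and sets $A_i\subset\mathbb N$ of positive lower density, some $x$ has $\mathcal N_T(x,V_i)\cap A_i$ of positive lower density for all $i$. $(T_1,\dots,T_N)$ is $d$-frequently hypercyclic if there is $x\in X$ such that for every non-empty open $W\subset X^N$, the set $\{n:(T_1^nx,\dots,T_N^nx)\in W\}$ has positive lower density. *)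

theory Defs
  imports "HOL-Analysis.Analysis" "HOL-Library.Liminf_Limsup"
begin

definition lower_density :: "nat set \<Rightarrow> ereal" where
  "lower_density A = liminf (\<lambda>n. ereal (real (card (A \<inter> {..<n})) / real n))"

definition visits :: "('a \<Rightarrow> 'a) \<Rightarrow> 'a \<Rightarrow> 'a set \<Rightarrow> nat set" where
  "visits T x V = {n. (T ^^ n) x \<in> V}"

definition hereditarily_frequently_hypercyclic :: "('a::topological_space \<Rightarrow> 'a) \<Rightarrow> bool" where
  "hereditarily_frequently_hypercyclic T \<longleftrightarrow>
     (\<forall>V :: nat \<Rightarrow> 'a set. \<forall>A :: nat \<Rightarrow> nat set.
        (\<forall>i. open (V i) \<and> V i \<noteq> {} \<and> lower_density (A i) > 0) \<longrightarrow>
        (\<exists>x. \<forall>i. lower_density (visits T x (V i) \<inter> A i) > 0))"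

text \<open>The tuple (T 0, ..., T (N-1)) acting on X^N (product topology on {..<N} \<rightarrow> X).\<close>
definition d_frequently_hypercyclic :: "(nat \<Rightarrow> 'a::topological_space \<Rightarrow> 'a) \<Rightarrow> nat \<Rightarrow> bool" where
  "d_frequently_hypercyclic T N \<longleftrightarrow>
     (\<exists>x. \<forall>W. openin (product_topology (\<lambda>_. euclidean) {..<N}) W \<and> W \<noteq> {} \<longrightarrow>
        lower_density {n. (\<lambda>i\<in>{..<N}. (T i ^^ n) x) \<in> W} > 0)"

end

theory Submission
  imports Defs
begin

text \<open>Let \<open>x\<close> be a d-frequently hypercyclic vector of \<open>(T\<^sub>1, \<dots>, T\<^sub>N)\<close> and \<open>S\<close> a hereditarily
  frequently hypercyclic operator. The \<open>T\<^sub>1\<close>-orbit of \<open>x\<close> is dense, so \<open>X\<close> has a countable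
  \<open>\<pi>\<close>-base \<open>\<B>\<close>. Applying hereditary frequent hypercyclicity of \<open>S\<close> to the countably many
  pairs \<open>(B, {n. \<forall>i. T\<^sub>i\<^sup>n x \<in> B\<^sub>i})\<close> with \<open>B, B\<^sub>i \<in> \<B>\<close> gives a vector \<open>y\<close> whose \<open>S\<close>-orbit visits
  every \<open>B\<close> along a set of positive lower density inside every return set of \<open>x\<close>.
  By Hahn-Banach there is an isomorphism \<open>L\<close> of \<open>X\<close> with \<open>L y = x\<close>; the operator
  \<open>T\<^sub>N\<^sub>+\<^sub>1 = L S L\<^sup>-\<^sup>1\<close> satisfies \<open>T\<^sub>N\<^sub>+\<^sub>1\<^sup>n x = L (S\<^sup>n y)\<close>, which makes \<open>x\<close> d-frequently hypercyclic
  for the extended tuple. Hahn-Banach itself comes from the fact that a minimal sublinear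
  functional below the norm is linear.\<close>

definition sublinear :: "('a::real_vector \<Rightarrow> real) \<Rightarrow> bool" where
  "sublinear q \<longleftrightarrow>
     (\<forall>a b. q (a + b) \<le> q a + q b) \<and> (\<forall>c a. c \<ge> 0 \<longrightarrow> q (c *\<^sub>R a) = c * q a)"

lemma sublinear_add_le: "sublinear q \<Longrightarrow> q (a + b) \<le> q a + q b"
  unfolding sublinear_def by blast

lemma sublinear_scaleR: "sublinear q \<Longrightarrow> c \<ge> 0 \<Longrightarrow> q (c *\<^sub>R a) = c * q a"
  unfolding sublinear_def by blast

lemma sublinear_zero: "sublinear q \<Longrightarrow> q 0 = 0"
  using sublinear_scaleR[of q 0 0] by simp

lemma sublinear_minus_le: "sublinear q \<Longrightarrow> - q (- a) \<le> q a"
  using sublinear_add_le[of q a "- a"] sublinear_zero[of q] by simp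

lemma sublinear_norm: "sublinear norm"
  unfolding sublinear_def by (simp add: norm_triangle_ineq)

lemma cINF_const_mult:
  fixes f :: "'b \<Rightarrow> real"
  assumes A: "A \<noteq> {}" and bdd: "bdd_below (f ` A)" and c: "c \<ge> 0"
  shows "(INF x\<in>A. c * f x) = c * (INF x\<in>A. f x)"
proof (cases "c = 0")
  case True
  then show ?thesis using A by simp
next
  case False
  with c have c: "c > 0" by simp
  obtain M where "\<forall>x\<in>A. M \<le> f x"
    using bdd by (auto simp: bdd_below_def)
  then have bdd_c: "bdd_below ((\<lambda>x. c * f x) ` A)"
    using c by (intro bdd_belowI2[of _ "c * M"]) (simp add: mult_left_mono)
  have "(INF x\<in>A. c * f x) / c \<le> (INF x\<in>A. f x)"
    by (rule cINF_greatest[OF A]) (use cINF_lower[OF bdd_c] c in \<open>simp add: field_simps\<close>)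
  moreover have "c * (INF x\<in>A. f x) \<le> (INF x\<in>A. c * f x)"
    by (rule cINF_greatest[OF A]) (use cINF_lower[OF bdd] c in simp)
  ultimately show ?thesis
    using c by (simp add: field_simps)
qed

text \<open>For a minimal sublinear \<open>q\<close>, comparing \<open>q\<close> with \<open>directional_inf q z\<close> forces
  \<open>q (- z) = - q z\<close>, i.e. linearity.\<close>
definition directional_inf :: "('a::real_vector \<Rightarrow> real) \<Rightarrow> 'a \<Rightarrow> 'a \<Rightarrow> real" where
  "directional_inf q z a = (INF t\<in>{0..}. q (a + t *\<^sub>R z) - t * q z)"

lemma bdd_below_directional_inf:
  assumes q: "sublinear q"
  shows "bdd_below ((\<lambda>t. q (a + t *\<^sub>R z) - t * q z) ` {0..})"
proof (rule bdd_belowI2)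
  fix t :: real assume "t \<in> {0..}"
  then have "t * q z = q ((a + t *\<^sub>R z) + - a)"
    using sublinear_scaleR[OF q] by simp
  also have "\<dots> \<le> q (a + t *\<^sub>R z) + q (- a)"
    by (rule sublinear_add_le[OF q])
  finally show "- q (- a) \<le> q (a + t *\<^sub>R z) - t * q z"
    by simp
qed

lemma directional_inf_le:
  "sublinear q \<Longrightarrow> t \<ge> 0 \<Longrightarrow> directional_inf q z a \<le> q (a + t *\<^sub>R z) - t * q z"
  unfolding directional_inf_def by (rule cINF_lower[OF bdd_below_directional_inf]) auto

lemma directional_inf_greatest:
  "(\<And>t. t \<ge> 0 \<Longrightarrow> m \<le> q (a + t *\<^sub>R z) - t * q z) \<Longrightarrow> m \<le> directional_inf q z a"
  unfolding directional_inf_def by (rule cINF_greatest) auto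

lemma directional_inf_le_self: "sublinear q \<Longrightarrow> directional_inf q z a \<le> q a"
  using directional_inf_le[of q 0 z a] by simp

lemma directional_inf_minus: "sublinear q \<Longrightarrow> directional_inf q z (- z) \<le> - q z"
  using directional_inf_le[of q 1 z "- z"] sublinear_zero[of q] by simp

lemma directional_inf_add_le:
  assumes q: "sublinear q"
  shows "directional_inf q z (a + b) \<le> directional_inf q z a + directional_inf q z b"
proof -
  let ?D = "directional_inf q z"
  have split: "?D (a + b) - (q (b + t *\<^sub>R z) - t * q z) \<le> q (a + s *\<^sub>R z) - s * q z"
    if "s \<ge> 0" "t \<ge> 0" for s t
  proof -
    have "?D (a + b) \<le> q ((a + s *\<^sub>R z) + (b + t *\<^sub>R z)) - (s + t) * q z"
      using directional_inf_le[OF q, of "s + t" z "a + b"] that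
      by (simp add: algebra_simps)
    also have "\<dots> \<le> q (a + s *\<^sub>R z) + q (b + t *\<^sub>R z) - (s + t) * q z"
      using sublinear_add_le[OF q] by simp
    finally show ?thesis
      by (simp add: algebra_simps)
  qed
  have "?D (a + b) - (q (b + t *\<^sub>R z) - t * q z) \<le> ?D a" if "t \<ge> 0" for t
    by (rule directional_inf_greatest) (rule split[OF _ that])
  then have "?D (a + b) - ?D a \<le> ?D b"
    by (intro directional_inf_greatest) (simp add: algebra_simps)
  then show ?thesis
    by simp
qed

lemma directional_inf_scaleR:
  assumes q: "sublinear q" and "c \<ge> 0"
  shows "directional_inf q z (c *\<^sub>R a) = c * directional_inf q z a"
proof (cases "c = 0")
  case True
  have "directional_inf q z 0 = (INF t\<in>{0::real..}. 0)"
    unfolding directional_inf_def by (rule INF_cong) (simp_all add: sublinear_scaleR[OF q])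
  then show ?thesis
    using True by simp
next
  case False
  with \<open>c \<ge> 0\<close> have c: "c > 0" by simp
  have "t \<in> (\<lambda>s. c * s) ` {0..}" if "t \<ge> 0" for t
    using c that by (intro image_eqI[where x = "t / c"]) auto
  then have reindex: "{0..} = (\<lambda>s. c * s) ` {0::real..}"
    using c by auto
  have "directional_inf q z (c *\<^sub>R a) =
      (INF t\<in>(\<lambda>s. c * s) ` {0..}. q (c *\<^sub>R a + t *\<^sub>R z) - t * q z)"
    unfolding directional_inf_def by (subst reindex) (rule refl)
  also have "\<dots> = (INF s\<in>{0..}. q (c *\<^sub>R a + (c * s) *\<^sub>R z) - (c * s) * q z)"
    by (simp only: image_image)
  also have "\<dots> = (INF s\<in>{0..}. c * (q (a + s *\<^sub>R z) - s * q z))"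
    using c by (intro INF_cong refl)
      (simp add: sublinear_scaleR[OF q, symmetric] scaleR_add_right right_diff_distrib)
  also have "\<dots> = c * directional_inf q z a"
    unfolding directional_inf_def
    by (rule cINF_const_mult[OF _ bdd_below_directional_inf[OF q]]) (use c in auto)
  finally show ?thesis .
qed

lemma sublinear_directional_inf: "sublinear q \<Longrightarrow> sublinear (directional_inf q z)"
  unfolding sublinear_def[of "directional_inf q z"]
  by (simp add: directional_inf_add_le directional_inf_scaleR)

lemma bdd_below_sublinear_below:
  assumes "\<forall>q\<in>C. sublinear q \<and> q \<le> p"
  shows "bdd_below ((\<lambda>q. q a) ` C)"
proof (rule bdd_belowI2)
  fix q assume "q \<in> C"
  then have "sublinear q" "q (- a) \<le> p (- a)"
    using assms by (auto simp: le_fun_def)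
  then show "- p (- a) \<le> q a"
    using sublinear_minus_le[of q a] by linarith
qed

lemma sublinear_chain_Inf:
  assumes C: "C \<noteq> {}" "\<forall>q\<in>C. sublinear q \<and> q \<le> p"
    and chain: "\<forall>q1\<in>C. \<forall>q2\<in>C. q1 \<le> q2 \<or> q2 \<le> q1"
  shows "sublinear (\<lambda>a. INF q\<in>C. q a)"
proof -
  let ?g = "\<lambda>a. INF q\<in>C. q a"
  note bdd = bdd_below_sublinear_below[OF C(2)]
  have two: "?g (a + b) \<le> q1 a + q2 b" if q12: "q1 \<in> C" "q2 \<in> C" for a b q1 q2
  proof -
    obtain q where q: "q \<in> C" "q \<le> q1" "q \<le> q2"
      using chain q12 by blast
    have "?g (a + b) \<le> q (a + b)"
      by (rule cINF_lower[OF bdd q(1)])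
    also have "\<dots> \<le> q a + q b"
      using C(2) q(1) by (simp add: sublinear_add_le)
    also have "\<dots> \<le> q1 a + q2 b"
      using q by (simp add: le_fun_def add_mono)
    finally show ?thesis .
  qed
  have add: "?g (a + b) \<le> ?g a + ?g b" for a b
  proof -
    have "?g (a + b) - q2 b \<le> ?g a" if "q2 \<in> C" for q2
    proof (rule cINF_greatest[OF C(1)])
      fix q1 assume "q1 \<in> C"
      then show "?g (a + b) - q2 b \<le> q1 a"
        using two[of q1 q2 a b] that by linarith
    qed
    then have "?g (a + b) - ?g a \<le> ?g b"
      by (intro cINF_greatest[OF C(1)]) (simp add: field_simps)
    then show ?thesis
      by simp
  qed
  have scale: "?g (c *\<^sub>R a) = c * ?g a" if "c \<ge> 0" for c a
  proof -
    have "?g (c *\<^sub>R a) = (INF q\<in>C. c * q a)"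
      using C(2) that by (intro INF_cong refl) (simp add: sublinear_scaleR)
    also have "\<dots> = c * ?g a"
      by (rule cINF_const_mult[OF C(1) bdd that])
    finally show ?thesis .
  qed
  show ?thesis
    unfolding sublinear_def
  proof (intro conjI allI impI)
    show "?g (a + b) \<le> ?g a + ?g b" for a b
      by (rule add)
    show "?g (c *\<^sub>R a) = c * ?g a" if "c \<ge> 0" for c a
      by (rule scale[OF that])
  qed
qed

lemma exists_minimal_sublinear_below:
  assumes "sublinear p"
  obtains m where "sublinear m" "m \<le> p" "\<And>q. sublinear q \<Longrightarrow> q \<le> m \<Longrightarrow> q = m"
proof -
  define A where "A = {q. sublinear q \<and> q \<le> p}"
  have po: "partial_order_on A (relation_of (\<ge>) A)"
    by (rule partial_order_on_relation_ofI) auto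
  have "\<exists>u\<in>A. \<forall>q\<in>C. u \<le> q" if "C \<in> Chains (relation_of (\<ge>) A)" for C
  proof (cases "C = {}")
    case True
    then show ?thesis
      using assms by (auto simp: A_def)
  next
    case False
    have C: "\<forall>q\<in>C. sublinear q \<and> q \<le> p" "\<forall>q1\<in>C. \<forall>q2\<in>C. q1 \<le> q2 \<or> q2 \<le> q1"
      using that unfolding Chains_def relation_of_def A_def by blast+
    let ?g = "\<lambda>a. INF q\<in>C. q a"
    have below: "\<forall>q\<in>C. ?g \<le> q"
      using cINF_lower[OF bdd_below_sublinear_below[OF C(1)]] by (auto simp: le_fun_def)
    obtain q0 where "q0 \<in> C"
      using False by blast
    then have "?g \<le> p"
      using below C(1) by (blast intro: order_trans)
    then have "?g \<in> A"
      using sublinear_chain_Inf[OF False C] by (simp add: A_def)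
    with below show ?thesis by blast
  qed
  then obtain m where "m \<in> A" "\<And>q. q \<in> A \<Longrightarrow> q \<le> m \<Longrightarrow> q = m"
    using predicate_Zorn[OF po] by blast
  then show thesis
    using that by (auto simp: A_def intro: order_trans)
qed

lemma minimal_sublinear_linear:
  assumes m: "sublinear m" and minimal: "\<And>q. sublinear q \<Longrightarrow> q \<le> m \<Longrightarrow> q = m"
  shows "linear m"
proof -
  have minus: "m (- z) = - m z" for z
  proof -
    have "directional_inf m z = m"
      using minimal sublinear_directional_inf[OF m] directional_inf_le_self[OF m]
      by (simp add: le_fun_def)
    then have "m (- z) \<le> - m z"
      using directional_inf_minus[OF m, of z] by simp
    then show ?thesis
      using sublinear_minus_le[OF m, of "- z"] by simp
  qed
  show ?thesis
  proof (rule linearI)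
    show "m (a + b) = m a + m b" for a b
      using sublinear_add_le[OF m, of a b] sublinear_add_le[OF m, of "- a" "- b"]
        minus[of "a + b"] minus[of a] minus[of b]
      by (simp add: add.commute)
    show "m (c *\<^sub>R a) = c *\<^sub>R m a" for c a
    proof (cases "c \<ge> 0")
      case True
      then show ?thesis by (simp add: sublinear_scaleR[OF m])
    next
      case False
      then have "m ((- c) *\<^sub>R (- a)) = (- c) * m (- a)"
        by (intro sublinear_scaleR[OF m]) simp
      then show ?thesis
        using minus[of a] by simp
    qed
  qed
qed

lemma exists_norming_functional:
  fixes v :: "'a::real_normed_vector"
  shows "\<exists>f :: 'a \<Rightarrow> real. bounded_linear f \<and> (\<forall>w. \<bar>f w\<bar> \<le> norm w) \<and> f v = norm v"
proof -
  have p: "sublinear (directional_inf norm v)"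
    by (rule sublinear_directional_inf[OF sublinear_norm])
  obtain m where m: "sublinear m" "m \<le> directional_inf norm v"
    and minimal: "\<And>q. sublinear q \<Longrightarrow> q \<le> m \<Longrightarrow> q = m"
    using exists_minimal_sublinear_below[OF p] by blast
  have lin: "linear m"
    by (rule minimal_sublinear_linear[OF m(1) minimal])
  have le_norm: "m w \<le> norm w" for w
    using le_funD[OF m(2), of w] directional_inf_le_self[OF sublinear_norm, of v w] by simp
  have minus: "m (- w) = - m w" for w
    using linear_neg[OF lin] .
  have abs_le: "\<bar>m w\<bar> \<le> norm w" for w
  proof -
    have "- m w \<le> norm w"
      using le_norm[of "- w"] minus[of w] by simp
    then show ?thesis
      using le_norm[of w] by (simp add: abs_le_iff)
  qed
  have "bounded_linear m"
    by (rule bounded_linear_intro[where K = 1])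
      (use lin abs_le in \<open>simp_all add: linear_add linear_scale\<close>)
  moreover note abs_le
  moreover have "m v = norm v"
  proof (rule antisym)
    show "m v \<le> norm v"
      by (rule le_norm)
    show "norm v \<le> m v"
      using le_funD[OF m(2), of "- v"] directional_inf_minus[OF sublinear_norm, of v] minus[of v]
      by simp
  qed
  ultimately show ?thesis
    by blast
qed

lemma exists_functional_nonzero_at:
  fixes x y :: "'a::real_normed_vector"
  assumes "x \<noteq> 0" "y \<noteq> 0"
  obtains f :: "'a \<Rightarrow> real" where "bounded_linear f" "f x \<noteq> 0" "f y \<noteq> 0"
proof -
  obtain g :: "'a \<Rightarrow> real" where g: "bounded_linear g" "g x = norm x"
    using exists_norming_functional[of x] by blast
  obtain h :: "'a \<Rightarrow> real" where h: "bounded_linear h" "h y = norm y"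
    using exists_norming_functional[of y] by blast
  have "g x \<noteq> 0" "h y \<noteq> 0"
    using g h assms by simp_all
  show thesis
  proof (cases "g y = 0 \<and> h x = 0")
    case True
    with \<open>g x \<noteq> 0\<close> \<open>h y \<noteq> 0\<close> show thesis
      by (intro that[of "\<lambda>v. g v + h v"] bounded_linear_add g(1) h(1)) simp_all
  next
    case False
    with \<open>g x \<noteq> 0\<close> \<open>h y \<noteq> 0\<close> show thesis
      using that[OF g(1)] that[OF h(1)] by blast
  qed
qed

lemma exists_isomorphism_mapping:
  fixes x y :: "'a::real_normed_vector"
  assumes "x = 0 \<longleftrightarrow> y = 0"
  obtains L L' :: "'a \<Rightarrow> 'a"
  where "bounded_linear L" "bounded_linear L'" "\<And>v. L' (L v) = v" "\<And>v. L (L' v) = v" "L y = x"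
proof (cases "y = 0")
  case True
  with assms show thesis
    by (intro that[of "\<lambda>v. v" "\<lambda>v. v"]) (simp_all add: bounded_linear_ident)
next
  case False
  then obtain f :: "'a \<Rightarrow> real" where f: "bounded_linear f" "f x \<noteq> 0" "f y \<noteq> 0"
    using assms exists_functional_nonzero_at by metis
  interpret f: bounded_linear f by (rule f(1))
  define L where "L v = v + (f v / f y) *\<^sub>R (x - y)" for v
    \<comment> \<open>identity plus a rank-one map; \<open>f x \<noteq> 0\<close> is what makes it invertible\<close>
  define L' where "L' v = v - (f v / f x) *\<^sub>R (x - y)" for v
  have rank_one: "bounded_linear (\<lambda>v. (f v / c) *\<^sub>R (x - y))" for c
    using bounded_linear_compose[OF bounded_linear_scaleR_left[of "x - y"]
        bounded_linear_compose[OF bounded_linear_divide[of c] f(1)]]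
    by (simp add: o_def)
  have "bounded_linear L"
    unfolding L_def[abs_def] by (intro bounded_linear_add bounded_linear_ident rank_one)
  moreover have "bounded_linear L'"
    unfolding L'_def[abs_def] by (intro bounded_linear_sub bounded_linear_ident rank_one)
  moreover have "L' (L v) = v" for v
  proof -
    have "f (L v) / f x = f v / f y"
      unfolding L_def using f(2,3) by (simp add: f.add f.scale f.diff field_simps)
    then show ?thesis
      by (simp add: L'_def L_def)
  qed
  moreover have "L (L' v) = v" for v
  proof -
    have "f (L' v) / f y = f v / f x"
      unfolding L'_def using f(2,3) by (simp add: f.scale f.diff f.add field_simps)
    then show ?thesis
      by (simp add: L'_def L_def)
  qed
  moreover have "L y = x"
    unfolding L_def using f(3) by simp
  ultimately show thesis
    using that by blast
qed

lemma funpow_conjugate: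
  assumes "\<And>v. L' (L v) = v"
  shows "((\<lambda>v. L (S (L' v))) ^^ n) (L w) = L ((S ^^ n) w)"
  by (induction n) (auto simp: assms)

lemma lower_density_mono: "A \<subseteq> B \<Longrightarrow> lower_density A \<le> lower_density B"
  unfolding lower_density_def
proof (intro Liminf_mono always_eventually allI)
  fix n assume "A \<subseteq> B"
  then have "card (A \<inter> {..<n}) \<le> card (B \<inter> {..<n})"
    by (intro card_mono) auto
  then show "ereal (real (card (A \<inter> {..<n})) / real n)
      \<le> ereal (real (card (B \<inter> {..<n})) / real n)"
    by (simp add: divide_right_mono)
qed

lemma lower_density_pos_imp_nonempty: "lower_density A > 0 \<Longrightarrow> A \<noteq> {}"
  unfolding lower_density_def by (auto simp: Liminf_const)

lemma hereditarily_frequently_hypercyclic_countable: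
  assumes "hereditarily_frequently_hypercyclic S" "countable \<V>"
    and "\<And>V A. (V, A) \<in> \<V> \<Longrightarrow> open V \<and> V \<noteq> {} \<and> lower_density A > 0"
  obtains y where "\<And>V A. (V, A) \<in> \<V> \<Longrightarrow> lower_density (visits S y V \<inter> A) > 0"
proof (cases "\<V> = {}")
  case True
  then show thesis
    using that by blast
next
  case False
  define V where "V i = fst (from_nat_into \<V> i)" for i
  define A where "A i = snd (from_nat_into \<V> i)" for i
  have "(V i, A i) \<in> \<V>" for i
    using from_nat_into[OF False] by (simp add: V_def A_def)
  then obtain y where y: "\<forall>i. lower_density (visits S y (V i) \<inter> A i) > 0"
    using assms(1,3) unfolding hereditarily_frequently_hypercyclic_def by blast
  have "lower_density (visits S y V0 \<inter> A0) > 0" if "(V0, A0) \<in> \<V>" for V0 A0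
    using y[rule_format, of "to_nat_on \<V> (V0, A0)"] from_nat_into_to_nat_on[OF assms(2) that]
    by (simp add: V_def A_def)
  then show thesis
    using that by blast
qed

definition hypercyclic_vector :: "('a::topological_space \<Rightarrow> 'a) \<Rightarrow> 'a \<Rightarrow> bool" where
  "hypercyclic_vector T x \<longleftrightarrow> (\<forall>U. open U \<and> U \<noteq> {} \<longrightarrow> (\<exists>n. (T ^^ n) x \<in> U))"

lemma hypercyclic_vector_zero_iff:
  fixes T :: "'a::real_normed_vector \<Rightarrow> 'a"
  assumes "linear T" "hypercyclic_vector T x"
  shows "x = 0 \<longleftrightarrow> (\<forall>v::'a. v = 0)"
proof
  assume "x = 0"
  have "(T ^^ n) x = 0" for n
    unfolding \<open>x = 0\<close> by (induction n) (simp_all add: linear_0[OF assms(1)])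
  then have "\<not> (\<exists>n. (T ^^ n) x \<in> - {0})"
    by simp
  then have "- {0 :: 'a} = {}"
    using assms(2) open_Compl[OF closed_singleton] unfolding hypercyclic_vector_def by blast
  then show "\<forall>v::'a. v = 0"
    by auto
qed simp

definition d_frequently_hypercyclic_vector ::
    "(nat \<Rightarrow> 'a::topological_space \<Rightarrow> 'a) \<Rightarrow> nat \<Rightarrow> 'a \<Rightarrow> bool" where
  "d_frequently_hypercyclic_vector T N x \<longleftrightarrow>
     (\<forall>W. openin (product_topology (\<lambda>_. euclidean) {..<N}) W \<and> W \<noteq> {} \<longrightarrow>
        lower_density {n. (\<lambda>i\<in>{..<N}. (T i ^^ n) x) \<in> W} > 0)"

lemma d_frequently_hypercyclic_iff_vector:
  "d_frequently_hypercyclic T N \<longleftrightarrow> (\<exists>x. d_frequently_hypercyclic_vector T N x)"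
  unfolding d_frequently_hypercyclic_def d_frequently_hypercyclic_vector_def ..

lemma d_frequently_hypercyclic_vector_iff_boxes:
  "d_frequently_hypercyclic_vector T N x \<longleftrightarrow>
     (\<forall>U. (\<forall>i<N. open (U i) \<and> U i \<noteq> {}) \<longrightarrow>
        lower_density {n. \<forall>i<N. (T i ^^ n) x \<in> U i} > 0)"
  unfolding d_frequently_hypercyclic_vector_def
proof (intro iffI allI impI)
  fix U :: "nat \<Rightarrow> 'a set"
  assume W: "\<forall>W. openin (product_topology (\<lambda>_. euclidean) {..<N}) W \<and> W \<noteq> {} \<longrightarrow>
      lower_density {n. (\<lambda>i\<in>{..<N}. (T i ^^ n) x) \<in> W} > 0"
    and U: "\<forall>i<N. open (U i) \<and> U i \<noteq> {}"
  have "openin (product_topology (\<lambda>_. euclidean) {..<N}) (Pi\<^sub>E {..<N} U)"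
    using U by (auto simp: openin_PiE_gen)
  moreover have "Pi\<^sub>E {..<N} U \<noteq> {}"
    using U by (simp add: PiE_eq_empty_iff)
  ultimately have "lower_density {n. (\<lambda>i\<in>{..<N}. (T i ^^ n) x) \<in> Pi\<^sub>E {..<N} U} > 0"
    using W by blast
  moreover have "{n. (\<lambda>i\<in>{..<N}. (T i ^^ n) x) \<in> Pi\<^sub>E {..<N} U} = {n. \<forall>i<N. (T i ^^ n) x \<in> U i}"
    by auto
  ultimately show "lower_density {n. \<forall>i<N. (T i ^^ n) x \<in> U i} > 0"
    by simp
next
  fix W :: "(nat \<Rightarrow> 'a) set"
  assume boxes: "\<forall>U. (\<forall>i<N. open (U i) \<and> U i \<noteq> {}) \<longrightarrow>
      lower_density {n. \<forall>i<N. (T i ^^ n) x \<in> U i} > 0"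
    and W: "openin (product_topology (\<lambda>_. euclidean) {..<N}) W \<and> W \<noteq> {}"
  then obtain z where z: "z \<in> W"
    by blast
  obtain U where U: "\<forall>i\<in>{..<N}. openin euclidean (U i)" "z \<in> Pi\<^sub>E {..<N} U"
      "Pi\<^sub>E {..<N} U \<subseteq> W"
    using iffD1[OF openin_product_topology_alt, OF W[THEN conjunct1], rule_format, OF z] by blast
  then have "\<forall>i<N. open (U i) \<and> U i \<noteq> {}"
    by (auto simp: PiE_iff)
  then have pos: "lower_density {n. \<forall>i<N. (T i ^^ n) x \<in> U i} > 0"
    using boxes by blast
  have "{n. \<forall>i<N. (T i ^^ n) x \<in> U i} \<subseteq> {n. (\<lambda>i\<in>{..<N}. (T i ^^ n) x) \<in> W}"
  proof
    fix n assume "n \<in> {n. \<forall>i<N. (T i ^^ n) x \<in> U i}"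
    then have "(\<lambda>i\<in>{..<N}. (T i ^^ n) x) \<in> Pi\<^sub>E {..<N} U"
      by simp
    then show "n \<in> {n. (\<lambda>i\<in>{..<N}. (T i ^^ n) x) \<in> W}"
      using U(3) by blast
  qed
  then show "lower_density {n. (\<lambda>i\<in>{..<N}. (T i ^^ n) x) \<in> W} > 0"
    using pos lower_density_mono by (blast intro: less_le_trans)
qed

lemma d_frequently_hypercyclic_vector_hypercyclic:
  fixes T :: "nat \<Rightarrow> 'a::topological_space \<Rightarrow> 'a"
  assumes x: "d_frequently_hypercyclic_vector T N x" and "i < N"
  shows "hypercyclic_vector (T i) x"
  unfolding hypercyclic_vector_def
proof (intro allI impI)
  fix U :: "'a set" assume U: "open U \<and> U \<noteq> {}"
  define B where "B j = (if j = i then U else UNIV)" for j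
  have "\<forall>j<N. open (B j) \<and> B j \<noteq> {}"
    using U by (simp add: B_def)
  then have "lower_density {n. \<forall>j<N. (T j ^^ n) x \<in> B j} > 0"
    using x unfolding d_frequently_hypercyclic_vector_iff_boxes by blast
  then obtain n where "\<forall>j<N. (T j ^^ n) x \<in> B j"
    using lower_density_pos_imp_nonempty by blast
  then show "\<exists>n. (T i ^^ n) x \<in> U"
    using assms(2) unfolding B_def by force
qed

definition pi_base :: "'a::topological_space set set \<Rightarrow> bool" where
  "pi_base \<B> \<longleftrightarrow>
     (\<forall>B\<in>\<B>. open B \<and> B \<noteq> {}) \<and> (\<forall>U. open U \<and> U \<noteq> {} \<longrightarrow> (\<exists>B\<in>\<B>. B \<subseteq> U))"

lemma countable_pi_base_if_dense_sequence:
  fixes d :: "nat \<Rightarrow> 'a::metric_space"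
  assumes dense: "\<And>U. open U \<Longrightarrow> U \<noteq> {} \<Longrightarrow> \<exists>k. d k \<in> U"
  obtains \<B> :: "'a set set" where "countable \<B>" "pi_base \<B>"
proof -
  define \<B> where "\<B> = (\<lambda>p. ball (d (fst p)) (1 / real (Suc (snd p)))) ` UNIV"
  have "\<exists>B\<in>\<B>. B \<subseteq> U" if U: "open U" "U \<noteq> {}" for U
  proof -
    obtain k where "d k \<in> U"
      using dense[OF U] by blast
    then obtain e where "e > 0" "ball (d k) e \<subseteq> U"
      using U(1) by (meson openE)
    moreover obtain m where "inverse (real (Suc m)) < e"
      using reals_Archimedean[OF \<open>e > 0\<close>] by blast
    then have "ball (d k) (1 / real (Suc m)) \<subseteq> ball (d k) e"
      by (intro subset_ball) (simp add: inverse_eq_divide)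
    ultimately have "ball (d k) (1 / real (Suc m)) \<subseteq> U"
      by blast
    moreover have "ball (d k) (1 / real (Suc m)) \<in> \<B>"
      unfolding \<B>_def by (rule rev_image_eqI[of "(k, m)"]) simp_all
    ultimately show ?thesis
      by blast
  qed
  moreover have "open B \<and> B \<noteq> {}" if "B \<in> \<B>" for B
  proof -
    obtain p where "B = ball (d (fst p)) (1 / real (Suc (snd p)))"
      using \<open>B \<in> \<B>\<close> unfolding \<B>_def by blast
    then show ?thesis
      by simp
  qed
  ultimately have "pi_base \<B>"
    unfolding pi_base_def by blast
  moreover have "countable \<B>"
    unfolding \<B>_def by simp
  ultimately show thesis
    using that by blast
qed

lemma exists_vector_visiting_return_sets:
  fixes S :: "'a::topological_space \<Rightarrow> 'a"
  assumes "hereditarily_frequently_hypercyclic S" "d_frequently_hypercyclic_vector T N x"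
    and "countable \<B>" "pi_base \<B>"
  obtains y where "\<And>B Bs. B \<in> \<B> \<Longrightarrow> \<forall>i<N. Bs i \<in> \<B> \<Longrightarrow>
      lower_density (visits S y B \<inter> {n. \<forall>i<N. (T i ^^ n) x \<in> Bs i}) > 0"
    and "hypercyclic_vector S y"
proof -
  define \<V> where
    "\<V> = (\<lambda>(B, Bs). (B, {n. \<forall>i<N. (T i ^^ n) x \<in> Bs i})) ` (\<B> \<times> Pi\<^sub>E {..<N} (\<lambda>_. \<B>))"
  have countable: "countable \<V>"
    unfolding \<V>_def using assms(3) by (intro countable_image countable_SIGMA countable_PiE) auto
  have admissible: "open V \<and> V \<noteq> {} \<and> lower_density A > 0" if "(V, A) \<in> \<V>" for V A
  proof -
    from that obtain p where p: "p \<in> \<B> \<times> Pi\<^sub>E {..<N} (\<lambda>_. \<B>)"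
      "(V, A) = (\<lambda>(B, Bs). (B, {n. \<forall>i<N. (T i ^^ n) x \<in> Bs i})) p"
      unfolding \<V>_def by (rule imageE)
    obtain B Bs where "p = (B, Bs)"
      by (cases p)
    with p have "V \<in> \<B>" "Bs \<in> Pi\<^sub>E {..<N} (\<lambda>_. \<B>)"
      and A: "A = {n. \<forall>i<N. (T i ^^ n) x \<in> Bs i}"
      by simp_all
    then have "open V \<and> V \<noteq> {}" "\<forall>i<N. open (Bs i) \<and> Bs i \<noteq> {}"
      using assms(4) unfolding pi_base_def by (auto dest: PiE_mem)
    moreover have "lower_density A > 0"
      unfolding A using assms(2) \<open>\<forall>i<N. open (Bs i) \<and> Bs i \<noteq> {}\<close>
      unfolding d_frequently_hypercyclic_vector_iff_boxes by blast
    ultimately show ?thesis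
      by blast
  qed
  obtain y where y: "\<And>V A. (V, A) \<in> \<V> \<Longrightarrow> lower_density (visits S y V \<inter> A) > 0"
    using hereditarily_frequently_hypercyclic_countable[OF assms(1) countable admissible] by blast
  have visiting: "lower_density (visits S y B \<inter> {n. \<forall>i<N. (T i ^^ n) x \<in> Bs i}) > 0"
    if "B \<in> \<B>" "\<forall>i<N. Bs i \<in> \<B>" for B Bs
  proof -
    have "(B, restrict Bs {..<N}) \<in> \<B> \<times> Pi\<^sub>E {..<N} (\<lambda>_. \<B>)"
      using that by auto
    then have "(B, {n. \<forall>i<N. (T i ^^ n) x \<in> Bs i}) \<in> \<V>"
      unfolding \<V>_def by (rule rev_image_eqI) auto
    then show ?thesis
      by (rule y)
  qed
  have "hypercyclic_vector S y"
    unfolding hypercyclic_vector_def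
  proof (intro allI impI)
    fix U :: "'a set" assume "open U \<and> U \<noteq> {}"
    then obtain B where B: "B \<in> \<B>" "B \<subseteq> U"
      using assms(4) unfolding pi_base_def by blast
    then have "visits S y B \<inter> {n. \<forall>i<N. (T i ^^ n) x \<in> B} \<noteq> {}"
      using visiting[of B "\<lambda>_. B"] by (simp add: lower_density_pos_imp_nonempty)
    then show "\<exists>n. (S ^^ n) y \<in> U"
      using B(2) by (auto simp: visits_def)
  qed
  with visiting show thesis
    by (rule that)
qed

lemma d_frequently_hypercyclic_vector_extend:
  fixes T :: "nat \<Rightarrow> 'a::topological_space \<Rightarrow> 'a"
  assumes \<B>: "pi_base \<B>"
    and y: "\<And>B Bs. B \<in> \<B> \<Longrightarrow> \<forall>i<N. Bs i \<in> \<B> \<Longrightarrow>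
      lower_density (visits S y B \<inter> {n. \<forall>i<N. (T i ^^ n) x \<in> Bs i}) > 0"
    and L: "continuous_on UNIV L" "\<And>v. L' (L v) = v" "\<And>v. L (L' v) = v" "L y = x"
  shows "d_frequently_hypercyclic_vector (T(N := \<lambda>v. L (S (L' v)))) (Suc N) x"
  unfolding d_frequently_hypercyclic_vector_iff_boxes
proof (intro allI impI)
  fix U :: "nat \<Rightarrow> 'a set" assume U: "\<forall>i<Suc N. open (U i) \<and> U i \<noteq> {}"
  have "\<forall>i<N. \<exists>B\<in>\<B>. B \<subseteq> U i"
    using U \<B> by (simp add: pi_base_def)
  then obtain Bs where Bs: "\<forall>i<N. Bs i \<in> \<B> \<and> Bs i \<subseteq> U i"
    by metis
  have "open (L -` U N)"
    using U L(1) by (simp add: open_vimage)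
  moreover have "L -` U N \<noteq> {}"
    using U L(3) by (metis emptyE equals0I lessI vimage_eq)
  ultimately obtain B where B: "B \<in> \<B>" "B \<subseteq> L -` U N"
    using \<B> unfolding pi_base_def by blast
  have orbit: "((\<lambda>v. L (S (L' v))) ^^ n) x = L ((S ^^ n) y)" for n
    using funpow_conjugate[where L = L and L' = L' and S = S and n = n and w = y, OF L(2)]
    by (simp add: L(4))
  have sub: "visits S y B \<inter> {n. \<forall>i<N. (T i ^^ n) x \<in> Bs i}
      \<subseteq> {n. \<forall>i<Suc N. ((T(N := \<lambda>v. L (S (L' v)))) i ^^ n) x \<in> U i}"
    using Bs B(2) by (auto simp: visits_def orbit less_Suc_eq)
  have "lower_density (visits S y B \<inter> {n. \<forall>i<N. (T i ^^ n) x \<in> Bs i}) > 0"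
    using y[OF B(1)] Bs by blast
  then show "lower_density {n. \<forall>i<Suc N. ((T(N := \<lambda>v. L (S (L' v)))) i ^^ n) x \<in> U i} > 0"
    using lower_density_mono[OF sub] by (rule less_le_trans)
qed

theorem corollary6p2:
  fixes T :: "nat \<Rightarrow> 'a::banach \<Rightarrow> 'a" and N :: nat
  assumes "\<exists>S :: 'a \<Rightarrow> 'a. bounded_linear S \<and> hereditarily_frequently_hypercyclic S"
    and "N \<ge> 1"
    and "\<forall>i<N. bounded_linear (T i)"
    and "d_frequently_hypercyclic T N"
  shows "\<exists>S :: 'a \<Rightarrow> 'a. bounded_linear S \<and> d_frequently_hypercyclic (T(N := S)) (Suc N)"
proof -
  obtain S :: "'a \<Rightarrow> 'a" where S: "bounded_linear S" "hereditarily_frequently_hypercyclic S"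
    using assms(1) by blast
  obtain x where x: "d_frequently_hypercyclic_vector T N x"
    using assms(4) d_frequently_hypercyclic_iff_vector by blast
  have hx: "hypercyclic_vector (T 0) x"
    using assms(2) by (intro d_frequently_hypercyclic_vector_hypercyclic[OF x]) simp
  then obtain \<B> :: "'a set set" where \<B>: "countable \<B>" "pi_base \<B>"
    using countable_pi_base_if_dense_sequence[of "\<lambda>n. (T 0 ^^ n) x"]
    unfolding hypercyclic_vector_def by blast
  obtain y where y: "\<And>B Bs. B \<in> \<B> \<Longrightarrow> \<forall>i<N. Bs i \<in> \<B> \<Longrightarrow>
      lower_density (visits S y B \<inter> {n. \<forall>i<N. (T i ^^ n) x \<in> Bs i}) > 0"
    and hy: "hypercyclic_vector S y"
    using exists_vector_visiting_return_sets[OF S(2) x \<B>] by blast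
  have "linear (T 0)"
    using assms(2,3) by (intro bounded_linear.linear) simp
  then have "x = 0 \<longleftrightarrow> y = 0"
    using hypercyclic_vector_zero_iff[OF _ hx] hypercyclic_vector_zero_iff[OF _ hy]
      bounded_linear.linear[OF S(1)] by simp
  then obtain L L' where L: "bounded_linear L" "bounded_linear L'"
    "\<And>v. L' (L v) = v" "\<And>v. L (L' v) = v" "L y = x"
    by (rule exists_isomorphism_mapping) blast
  have "d_frequently_hypercyclic_vector (T(N := \<lambda>v. L (S (L' v)))) (Suc N) x"
    using \<B>(2) y linear_continuous_on[OF L(1)] L(3-5) by (rule d_frequently_hypercyclic_vector_extend)
  moreover have "bounded_linear (\<lambda>v. L (S (L' v)))"
    using bounded_linear_compose[OF L(1) bounded_linear_compose[OF S(1) L(2)]] by (simp add: o_def)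
  ultimately show ?thesis
    using d_frequently_hypercyclic_iff_vector by blast
qed

end
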